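(* Let $\tau:\mathbb{Z}^3\to\mathbb{C}\setminus\{0\}$, $(k,l,m)\mapsto\tau_{k,l,m}$, be arbitrary, and at a point $(k,l,m)$ write $\tau[a,b,c]:=\tau_{k+a,l+b,m+c}$. Define the row vectors $$V=\big(\tau[0,1,1]\tau[1,0,0],\ \tau[1,0,1]\tau[0,1,0],\ \tau[1,1,0]\tau[0,0,1]\big),\qquad W=(W_1,W_2,W_3,W_4),$$ with $W_1=\frac{\tau[-1,1,1]}{\tau[0,1,1]\tau[0,1,0]\tau[0,0,1]}-\frac{\tau[2,0,0]}{\tau[1,0,0]\tau[1,1,0]\tau[1,0,1]}$, $W_2=\frac{\tau[1,-1,1]}{\tau[1,0,1]\tau[1,0,0]\tau[0,0,1]}-\frac{\tau[0,2,0]}{\tau[0,1,0]\tau[0,1,1]\tau[1,1,0]}$, $W_3=\frac{\tau[1,1,-1]}{\tau[1,1,0]\tau[1,0,0]\tau[0,1,0]}-\frac{\tau[0,0,2]}{\tau[0,0,1]\tau[1,0,1]\tau[0,1,1]}$, $W_4=\frac{\tau[0,0,0]}{\tau[1,0,0]\tau[0,1,0]\tau[0,0,1]}-\frac{\tau[1,1,1]}{\tau[1,1,0]\tau[0,1,1]\tau[1,0,1]}$, and the $3\times 4$ matrices $P,Q,R$ (functions of $(k,l,m)$) by $$P=\begin{pmatrix}-\frac{\tau[1,0,0]\tau[-1,1,1]}{\tau[0,1,0]\tau[0,0,1]}&0&0&-\frac{\tau[0,0,0]\tau[0,1,1]}{\tau[0,1,0]\tau[0,0,1]}\\ -\frac{\tau[1,0,0]\tau[-1,1,0]}{\tau[0,1,0]\tau[0,0,0]}&0&\frac{\tau[0,0,1]\tau[0,1,-1]}{\tau[0,1,0]\tau[0,0,0]}&0\\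 -\frac{\tau[1,0,0]\tau[-1,0,1]}{\tau[0,0,1]\tau[0,0,0]}&\frac{\tau[0,1,0]\tau[0,-1,1]}{\tau[0,0,1]\tau[0,0,0]}&0&0\end{pmatrix},$$ $$Q=\begin{pmatrix}0&-\frac{\tau[0,1,0]\tau[1,-1,0]}{\tau[1,0,0]\tau[0,0,0]}&\frac{\tau[0,0,1]\tau[1,0,-1]}{\tau[1,0,0]\tau[0,0,0]}&0\\ 0&-\frac{\tau[0,1,0]\tau[1,-1,1]}{\tau[1,0,0]\tau[0,0,1]}&0&-\frac{\tau[0,0,0]\tau[1,0,1]}{\tau[1,0,0]\tau[0,0,1]}\\ \frac{\tau[1,0,0]\tau[-1,0,1]}{\tau[0,0,1]\tau[0,0,0]}&-\frac{\tau[0,1,0]\tau[0,-1,1]}{\tau[0,0,1]\tau[0,0,0]}&0&0\end{pmatrix},$$ $$R=\begin{pmatrix}0&\frac{\tau[0,1,0]\tau[1,-1,0]}{\tau[1,0,0]\tau[0,0,0]}&-\frac{\tau[0,0,1]\tau[1,0,-1]}{\tau[1,0,0]\tau[0,0,0]}&0\\ \frac{\tau[1,0,0]\tau[-1,1,0]}{\tau[0,1,0]\tau[0,0,0]}&0&-\frac{\tau[0,0,1]\tau[0,1,-1]}{\tau[0,1,0]\tau[0,0,0]}&0\\ 0&0&-\frac{\tau[0,0,1]\tau[1,1,-1]}{\tau[1,0,0]\tau[0,1,0]}&-\frac{\tau[1,1,0]\tau[0,0,0]}{\tau[1,0,0]\tau[0,1,0]}\end{pmatrix}.$$ Then at every $(k,l,m)\in\mathbb{Z}^3$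 the matrix identity $$P_{k+1,l,m}-P_{k,l,m}+Q_{k,l+1,m}-Q_{k,l,m}+R_{k,l,m+1}-R_{k,l,m}=V^{T}W$$ holds. Consequently: for constants $X=(A,B,C)$, premultiplying by $X$ gives four conservation laws (one per column) whose right-hand sides are multiples of $XV^T=A\tau[1,0,0]\tau[0,1,1]+B\tau[0,1,0]\tau[1,0,1]+C\tau[0,0,1]\tau[1,1,0]$, so they hold on every solution of the lattice AKP equation $XV^T=0$; and for constants $\omega=(a_1,a_2,a_3,a_4)$, postmultiplying by $\omega^T$ gives three conservation laws (one per row) whose right-hand sides are multiples of $W\omega^T$, where the equation $W\omega^T=0$ is equivalent (for nonvanishing $\tau$) to the dual AKP equation $$\begin{aligned}0=&\,a_1\big(\tau[-1,1,1]\tau[1,0,0]\tau[1,0,1]\tau[1,1,0]-\tau[0,0,1]\tau[0,1,0]\tau[0,1,1]\tau[2,0,0]\big)\\&+a_2\big(\tau[0,1,0]\tau[0,1,1]\tau[1,-1,1]\tau[1,1,0]-\tau[0,0,1]\tau[0,2,0]\tau[1,0,0]\tau[1,0,1]\big)\\&+a_3\big(\tau[0,0,1]\tau[0,1,1]\tau[1,0,1]\tau[1,1,-1]-\tau[0,0,2]\tau[0,1,0]\tau[1,0,0]\tau[1,1,0]\big)\\&+a_4\big(\tau[0,0,0]\tau[0,1,1]\tau[1,0,1]\tau[1,1,0]-\tau[0,0,1]\tau[0,1,0]\tau[1,0,0]\tau[1,1,1]\big).\end{aligned}$$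
   Context: A conservation law for a 3D lattice equation $E=0$ is an identity $\tilde{P}-P+\hat{Q}-Q+\dot{R}-R=E\Lambda$, where tilde, hat and dot denote forward shifts in $k$, $l$, $m$ respectively, so that the left-hand side vanishes on solutions of $E=0$. All quantities are evaluated at a lattice point $(k,l,m)$ using the notation $\tau[a,b,c]=\tau_{k+a,l+b,m+c}$; the subscripts on $P,Q,R$ in the identity indicate the lattice point at which these matrices are evaluated. *)

theory Defs
  imports Complex_Main
begin

text \<open>Lattice field tau on Z^3; sh t k l m a b c is tau[a,b,c] at the point (k,l,m).\<close>
definition sh :: "(int \<Rightarrow> int \<Rightarrow> int \<Rightarrow> complex) \<Rightarrow> int \<Rightarrow> int \<Rightarrow> int \<Rightarrow> int \<Rightarrow> int \<Rightarrow> int \<Rightarrow> complex" where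
  "sh t k l m a b c = t (k + a) (l + b) (m + c)"

definition Vv :: "(int \<Rightarrow> int \<Rightarrow> int \<Rightarrow> complex) \<Rightarrow> int \<Rightarrow> int \<Rightarrow> int \<Rightarrow> complex list" where
  "Vv t k l m = (let T = sh t k l m in
     [T 0 1 1 * T 1 0 0, T 1 0 1 * T 0 1 0, T 1 1 0 * T 0 0 1])"

definition Wv :: "(int \<Rightarrow> int \<Rightarrow> int \<Rightarrow> complex) \<Rightarrow> int \<Rightarrow> int \<Rightarrow> int \<Rightarrow> complex list" where
  "Wv t k l m = (let T = sh t k l m in
     [T (-1) 1 1 / (T 0 1 1 * T 0 1 0 * T 0 0 1) - T 2 0 0 / (T 1 0 0 * T 1 1 0 * T 1 0 1),
      T 1 (-1) 1 / (T 1 0 1 * T 1 0 0 * T 0 0 1) - T 0 2 0 / (T 0 1 0 * T 0 1 1 * T 1 1 0),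
      T 1 1 (-1) / (T 1 1 0 * T 1 0 0 * T 0 1 0) - T 0 0 2 / (T 0 0 1 * T 1 0 1 * T 0 1 1),
      T 0 0 0 / (T 1 0 0 * T 0 1 0 * T 0 0 1) - T 1 1 1 / (T 1 1 0 * T 0 1 1 * T 1 0 1)])"

text \<open>3x4 matrices as lists of rows (row index 0..2, column index 0..3).\<close>
definition Pm :: "(int \<Rightarrow> int \<Rightarrow> int \<Rightarrow> complex) \<Rightarrow> int \<Rightarrow> int \<Rightarrow> int \<Rightarrow> complex list list" where
  "Pm t k l m = (let T = sh t k l m in
     [[- (T 1 0 0 * T (-1) 1 1) / (T 0 1 0 * T 0 0 1), 0, 0, - (T 0 0 0 * T 0 1 1) / (T 0 1 0 * T 0 0 1)],
      [- (T 1 0 0 * T (-1) 1 0) / (T 0 1 0 * T 0 0 0), 0, (T 0 0 1 * T 0 1 (-1)) / (T 0 1 0 * T 0 0 0), 0],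
      [- (T 1 0 0 * T (-1) 0 1) / (T 0 0 1 * T 0 0 0), (T 0 1 0 * T 0 (-1) 1) / (T 0 0 1 * T 0 0 0), 0, 0]])"

definition Qm :: "(int \<Rightarrow> int \<Rightarrow> int \<Rightarrow> complex) \<Rightarrow> int \<Rightarrow> int \<Rightarrow> int \<Rightarrow> complex list list" where
  "Qm t k l m = (let T = sh t k l m in
     [[0, - (T 0 1 0 * T 1 (-1) 0) / (T 1 0 0 * T 0 0 0), (T 0 0 1 * T 1 0 (-1)) / (T 1 0 0 * T 0 0 0), 0],
      [0, - (T 0 1 0 * T 1 (-1) 1) / (T 1 0 0 * T 0 0 1), 0, - (T 0 0 0 * T 1 0 1) / (T 1 0 0 * T 0 0 1)],
      [(T 1 0 0 * T (-1) 0 1) / (T 0 0 1 * T 0 0 0), - (T 0 1 0 * T 0 (-1) 1) / (T 0 0 1 * T 0 0 0), 0, 0]])"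

definition Rm :: "(int \<Rightarrow> int \<Rightarrow> int \<Rightarrow> complex) \<Rightarrow> int \<Rightarrow> int \<Rightarrow> int \<Rightarrow> complex list list" where
  "Rm t k l m = (let T = sh t k l m in
     [[0, (T 0 1 0 * T 1 (-1) 0) / (T 1 0 0 * T 0 0 0), - (T 0 0 1 * T 1 0 (-1)) / (T 1 0 0 * T 0 0 0), 0],
      [(T 1 0 0 * T (-1) 1 0) / (T 0 1 0 * T 0 0 0), 0, - (T 0 0 1 * T 0 1 (-1)) / (T 0 1 0 * T 0 0 0), 0],
      [0, 0, - (T 0 0 1 * T 1 1 (-1)) / (T 1 0 0 * T 0 1 0), - (T 1 1 0 * T 0 0 0) / (T 1 0 0 * T 0 1 0)]])"

definition Dv :: "(int \<Rightarrow> int \<Rightarrow> int \<Rightarrow> complex) \<Rightarrow> int \<Rightarrow> int \<Rightarrow> int \<Rightarrow> nat \<Rightarrow> nat \<Rightarrow> complex" where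
  "Dv t k l m i j =
     Pm t (k + 1) l m ! i ! j - Pm t k l m ! i ! j
   + Qm t k (l + 1) m ! i ! j - Qm t k l m ! i ! j
   + Rm t k l (m + 1) ! i ! j - Rm t k l m ! i ! j"

definition dualAKP :: "(int \<Rightarrow> int \<Rightarrow> int \<Rightarrow> complex) \<Rightarrow> complex \<Rightarrow> complex \<Rightarrow> complex \<Rightarrow> complex \<Rightarrow> int \<Rightarrow> int \<Rightarrow> int \<Rightarrow> complex" where
  "dualAKP t a1 a2 a3 a4 k l m = (let T = sh t k l m in
       a1 * (T (-1) 1 1 * T 1 0 0 * T 1 0 1 * T 1 1 0 - T 0 0 1 * T 0 1 0 * T 0 1 1 * T 2 0 0)
     + a2 * (T 0 1 0 * T 0 1 1 * T 1 (-1) 1 * T 1 1 0 - T 0 0 1 * T 0 2 0 * T 1 0 0 * T 1 0 1)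
     + a3 * (T 0 0 1 * T 0 1 1 * T 1 0 1 * T 1 1 (-1) - T 0 0 2 * T 0 1 0 * T 1 0 0 * T 1 1 0)
     + a4 * (T 0 0 0 * T 0 1 1 * T 1 0 1 * T 1 1 0 - T 0 0 1 * T 0 1 0 * T 1 0 0 * T 1 1 1))"

end

theory Submission
  imports Defs
begin

text \<open>Each entry of the divergence is a rational identity among values of \<open>\<tau>\<close> at finitely
  many lattice points, which clearing the nonvanishing denominators turns into a polynomial identity.
  The conservation laws are then linear combinations of the rows or columns of the rank-one matrix
  \<open>V\<^sup>T W\<close>, and \<open>W \<omega>\<^sup>T\<close> is the dual AKP expression divided by a nonzero product of six
  values of \<open>\<tau>\<close>.\<close>

lemma Dv_eq_Vv_times_Wv:
  assumes nz: "\<forall>k l m. \<tau> k l m \<noteq> 0" and "i < 3" "j < 4"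
  shows "Dv \<tau> k l m i j = Vv \<tau> k l m ! i * Wv \<tau> k l m ! j"
proof -
  have "i \<in> {0, 1, 2}" "j \<in> {0, 1, 2, 3}"
    using \<open>i < 3\<close> \<open>j < 4\<close> by auto
  then show ?thesis
    using nz unfolding Dv_def Pm_def Qm_def Rm_def Vv_def Wv_def sh_def Let_def
    by (auto simp del: One_nat_def simp add: algebra_simps)
qed

lemma Vv_nth:
  "Vv \<tau> k l m ! 0 = sh \<tau> k l m 1 0 0 * sh \<tau> k l m 0 1 1"
  "Vv \<tau> k l m ! 1 = sh \<tau> k l m 0 1 0 * sh \<tau> k l m 1 0 1"
  "Vv \<tau> k l m ! 2 = sh \<tau> k l m 0 0 1 * sh \<tau> k l m 1 1 0"
  unfolding Vv_def Let_def by (simp_all add: mult.commute)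

lemma Wv_combination_times_denominator:
  assumes nz: "\<forall>k l m. \<tau> k l m \<noteq> 0"
  shows "(Wv \<tau> k l m ! 0 * a1 + Wv \<tau> k l m ! 1 * a2 + Wv \<tau> k l m ! 2 * a3 + Wv \<tau> k l m ! 3 * a4)
          * (sh \<tau> k l m 1 0 0 * sh \<tau> k l m 0 1 0 * sh \<tau> k l m 0 0 1
             * sh \<tau> k l m 1 1 0 * sh \<tau> k l m 0 1 1 * sh \<tau> k l m 1 0 1)
         = dualAKP \<tau> a1 a2 a3 a4 k l m"
  using nz unfolding Wv_def dualAKP_def sh_def Let_def by (simp add: field_simps)

lemma Wv_combination_eq_0_iff_dualAKP:
  assumes nz: "\<forall>k l m. \<tau> k l m \<noteq> 0"
  shows "Wv \<tau> k l m ! 0 * a1 + Wv \<tau> k l m ! 1 * a2 + Wv \<tau> k l m ! 2 * a3 + Wv \<tau> k l m ! 3 * a4 = 0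
         \<longleftrightarrow> dualAKP \<tau> a1 a2 a3 a4 k l m = 0"
  using Wv_combination_times_denominator[OF nz, of k l m a1 a2 a3 a4, symmetric] nz
  by (simp add: sh_def)

theorem mainTheorem1:
  fixes \<tau> :: "int \<Rightarrow> int \<Rightarrow> int \<Rightarrow> complex"
  assumes nz: "\<forall>k l m. \<tau> k l m \<noteq> 0"
  shows "(\<forall>k l m i j. i < 3 \<longrightarrow> j < 4 \<longrightarrow>
            Dv \<tau> k l m i j = Vv \<tau> k l m ! i * Wv \<tau> k l m ! j)
       \<and> (\<forall>A B C k l m j. j < 4 \<longrightarrow>
            A * Dv \<tau> k l m 0 j + B * Dv \<tau> k l m 1 j + C * Dv \<tau> k l m 2 j
            = (A * sh \<tau> k l m 1 0 0 * sh \<tau> k l m 0 1 1 + B * sh \<tau> k l m 0 1 0 * sh \<tau> k l m 1 0 1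
               + C * sh \<tau> k l m 0 0 1 * sh \<tau> k l m 1 1 0) * Wv \<tau> k l m ! j)
       \<and> (\<forall>a1 a2 a3 a4 k l m i. i < 3 \<longrightarrow>
            Dv \<tau> k l m i 0 * a1 + Dv \<tau> k l m i 1 * a2 + Dv \<tau> k l m i 2 * a3 + Dv \<tau> k l m i 3 * a4
            = Vv \<tau> k l m ! i * (Wv \<tau> k l m ! 0 * a1 + Wv \<tau> k l m ! 1 * a2
                                + Wv \<tau> k l m ! 2 * a3 + Wv \<tau> k l m ! 3 * a4))
       \<and> (\<forall>a1 a2 a3 a4 k l m.
            (Wv \<tau> k l m ! 0 * a1 + Wv \<tau> k l m ! 1 * a2 + Wv \<tau> k l m ! 2 * a3 + Wv \<tau> k l m ! 3 * a4 = 0)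
            \<longleftrightarrow> dualAKP \<tau> a1 a2 a3 a4 k l m = 0)"
proof (intro conjI allI impI)
  note D = Dv_eq_Vv_times_Wv[OF nz]
  fix k l m
  show "Dv \<tau> k l m i j = Vv \<tau> k l m ! i * Wv \<tau> k l m ! j" if "i < 3" "j < 4" for i j
    using D that .
  show "A * Dv \<tau> k l m 0 j + B * Dv \<tau> k l m 1 j + C * Dv \<tau> k l m 2 j
          = (A * sh \<tau> k l m 1 0 0 * sh \<tau> k l m 0 1 1 + B * sh \<tau> k l m 0 1 0 * sh \<tau> k l m 1 0 1
             + C * sh \<tau> k l m 0 0 1 * sh \<tau> k l m 1 1 0) * Wv \<tau> k l m ! j"
    if "j < 4" for A B C j
    using that D[of 0 j] D[of 1 j] D[of 2 j] Vv_nth[of \<tau> k l m] by (simp add: algebra_simps)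
  show "Dv \<tau> k l m i 0 * a1 + Dv \<tau> k l m i 1 * a2 + Dv \<tau> k l m i 2 * a3 + Dv \<tau> k l m i 3 * a4
          = Vv \<tau> k l m ! i * (Wv \<tau> k l m ! 0 * a1 + Wv \<tau> k l m ! 1 * a2
                              + Wv \<tau> k l m ! 2 * a3 + Wv \<tau> k l m ! 3 * a4)"
    if "i < 3" for a1 a2 a3 a4 i
    using that D[of i 0] D[of i 1] D[of i 2] D[of i 3] by (simp add: algebra_simps)
  show "Wv \<tau> k l m ! 0 * a1 + Wv \<tau> k l m ! 1 * a2 + Wv \<tau> k l m ! 2 * a3 + Wv \<tau> k l m ! 3 * a4 = 0
          \<longleftrightarrow> dualAKP \<tau> a1 a2 a3 a4 k l m = 0" for a1 a2 a3 a4
    using Wv_combination_eq_0_iff_dualAKP[OF nz] .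
qed

end
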